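(* Let $\Bbbk$ be a field of characteristic $0$, $n\ge2$, and let $(A,\mu)$ be an $n$-ary totally associative algebra over $\Bbbk$. Then $(A,[\cdot,\ldots,\cdot])$, where $[\cdot,\ldots,\cdot]$ is the $n$-commutator bracket of $\mu$, is an $n$-ary Nambu algebra, i.e. for all $x_1,\ldots,x_{n-1},y_1,\ldots,y_n\in A$, $[x_1,\ldots,x_{n-1},[y_1,\ldots,y_n]]=\sum_{i=1}^n[y_1,\ldots,y_{i-1},[x_1,\ldots,x_{n-1},y_i],y_{i+1},\ldots,y_n]$.
   Context: An $n$-ary algebra $(A,\mu)$ is a vector space with an $n$-linear map $\mu$, written $\mu(a_1,\ldots,a_n)=(a_1\cdots a_n)$. It is totally associative if for every $i\in\{1,\ldots,n-1\}$ and all $a_1,\ldots,a_{2n-1}$: $(a_1,\ldots,a_{i-1},(a_i\cdots a_{i+n-1}),a_{i+n},\ldots,a_{2n-1})=(a_1,\ldots,a_i,(a_{i+1}\cdots a_{i+n}),a_{i+n+1},\ldots,a_{2n-1})$. $n$-commutator words: in non-commuting variables $X_1,X_2,\ldots$, set $W_2=\{X_1X_2,-X_2X_1\}$ and for $n>2$, $W_n=\{zX_n,\,-X_nz : z\in W_{n-1}\}$. A word $w=\pm X_{i_1}\cdots X_{i_n}\in W_n$ acts by $w(a_1,\ldots,a_n)=\pm a_{i_1}\otimes\cdots\otimes a_{i_n}$. The $n$-commutator bracket is $[a_1,\ldots,a_n]=\sum_{w\in W_n}\mu(w(a_1,\ldots,a_n))$. *)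

theory Defs
  imports Main "HOL.Vector_Spaces"
begin

text \<open>n-ary operations are modelled as functions on lists; only lists of length n matter.\<close>

definition multilinear ::
  "('k::field \<Rightarrow> 'a::ab_group_add \<Rightarrow> 'a) \<Rightarrow> nat \<Rightarrow> ('a list \<Rightarrow> 'a) \<Rightarrow> bool" where
  "multilinear scale n mu \<longleftrightarrow>
     (\<forall>as i x y c. length as = n \<and> i < n \<longrightarrow>
        mu (as[i := x + y]) = mu (as[i := x]) + mu (as[i := y]) \<and>
        mu (as[i := scale c x]) = scale c (mu (as[i := x])))"

text \<open>Total associativity; position p (0-based) corresponds to i = p+1 in the paper.\<close>
definition totally_associative :: "nat \<Rightarrow> ('a list \<Rightarrow> 'a) \<Rightarrow> bool" where
  "totally_associative n mu \<longleftrightarrow>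
     (\<forall>as p. length as = 2 * n - 1 \<and> p + 2 \<le> n \<longrightarrow>
        mu (take p as @ [mu (take n (drop p as))] @ drop (p + n) as) =
        mu (take (Suc p) as @ [mu (take n (drop (Suc p) as))] @ drop (Suc p + n) as))"

text \<open>n-commutator words: pairs (sign, list of 1-based variable indices).
  W_2 = {X1 X2, - X2 X1}, W_n = {z X_n, - X_n z : z in W_(n-1)}.\<close>
fun comm_words :: "nat \<Rightarrow> (int \<times> nat list) list" where
  "comm_words 0 = []"
| "comm_words (Suc 0) = []"
| "comm_words (Suc (Suc 0)) = [(1, [1, 2]), (-1, [2, 1])]"
| "comm_words (Suc (Suc (Suc m))) =
     concat (map (\<lambda>(s, z). [(s, z @ [Suc (Suc (Suc m))]), (- s, Suc (Suc (Suc m)) # z)])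
                 (comm_words (Suc (Suc m))))"

definition n_commutator ::
  "('k::field \<Rightarrow> 'a::ab_group_add \<Rightarrow> 'a) \<Rightarrow> nat \<Rightarrow> ('a list \<Rightarrow> 'a) \<Rightarrow> 'a list \<Rightarrow> 'a" where
  "n_commutator scale n mu as =
     sum_list (map (\<lambda>(s, w). scale (of_int s) (mu (map (\<lambda>j. as ! (j - 1)) w))) (comm_words n))"

definition nambu :: "nat \<Rightarrow> ('a::ab_group_add list \<Rightarrow> 'a) \<Rightarrow> bool" where
  "nambu n br \<longleftrightarrow>
     (\<forall>xs ys. length xs = n - 1 \<and> length ys = n \<longrightarrow>
        br (xs @ [br ys]) = (\<Sum>i<n. br (ys[i := br (xs @ [ys ! i])])))"

end

theory Submission
  imports Defs "HOL-Library.Multiset"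
begin

text \<open>The n-commutator bracket is the left-normed iterated commutator
  \<open>[[\<dots>[a\<^sub>1,a\<^sub>2],\<dots>],a\<^sub>n]\<close> of the letters, evaluated by \<open>\<mu>\<close>. We therefore compute with
  formal signed sums of words over an alphabet. There the Nambu identity is just the Leibniz rule
  for \<open>ad X\<close>, \<open>X = [[\<dots>[x\<^sub>1,x\<^sub>2],\<dots>],x\<^sub>n\<^sub>-\<^sub>1]\<close>, acting on an iterated commutator, which follows
  from the Jacobi identity. To transport it back to \<open>A\<close>, note that substituting one bracket into
  another produces, word by word, terms \<open>\<mu>(u, \<mu>(z), v)\<close> with \<open>|u| + |v| = n - 1\<close>; by total
  associativity these all equal \<open>\<mu>(\<mu>(w\<^sub>1\<dots>w\<^sub>n), w\<^sub>n\<^sub>+\<^sub>1\<dots>w\<^sub>2\<^sub>n\<^sub>-\<^sub>1)\<close> for the concatenated word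
  \<open>w = u z v\<close>, so both sides of the identity become one and the same evaluation of formal sums of
  words of length \<open>2n - 1\<close>.\<close>

text \<open>Formal sums are only ever
  compared through \<open>wc_eval K\<close> for all \<open>K\<close>, i.e.\ as elements of the free module on words.\<close>

type_synonym 'b word_comb = "(bool \<times> 'b list) list"

definition wc_eval :: "('b list \<Rightarrow> 'a::ab_group_add) \<Rightarrow> 'b word_comb \<Rightarrow> 'a" where
  "wc_eval K F = sum_list (map (\<lambda>(s, w). if s then K w else - K w) F)"

definition wc_letter :: "'b \<Rightarrow> 'b word_comb" where
  "wc_letter b = [(True, [b])]"

definition wc_one :: "'b word_comb" where
  "wc_one = [(True, [])]"

definition wc_neg :: "'b word_comb \<Rightarrow> 'b word_comb" where
  "wc_neg F = map (\<lambda>(s, w). (\<not> s, w)) F"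

definition wc_mult :: "'b word_comb \<Rightarrow> 'b word_comb \<Rightarrow> 'b word_comb" where
  "wc_mult F G = concat (map (\<lambda>(s, v). map (\<lambda>(t, w). (s = t, v @ w)) G) F)"

definition wc_comm :: "'b word_comb \<Rightarrow> 'b word_comb \<Rightarrow> 'b word_comb" where
  "wc_comm F G = wc_mult F G @ wc_neg (wc_mult G F)"

definition wc_prod :: "'b word_comb list \<Rightarrow> 'b word_comb" where
  "wc_prod Fs = foldr wc_mult Fs wc_one"

definition left_comm :: "'b word_comb list \<Rightarrow> 'b word_comb" where
  "left_comm Fs = foldl wc_comm (hd Fs) (tl Fs)"

lemma wc_eval_Nil [simp]: "wc_eval K [] = 0"
  by (simp add: wc_eval_def)

lemma wc_eval_Cons [simp]: "wc_eval K ((s, w) # F) = (if s then K w else - K w) + wc_eval K F"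
  by (simp add: wc_eval_def)

lemma wc_eval_append [simp]: "wc_eval K (F @ G) = wc_eval K F + wc_eval K G"
  by (simp add: wc_eval_def)

lemma wc_eval_neg [simp]: "wc_eval K (wc_neg F) = - wc_eval K F"
  by (induction F) (auto simp: wc_neg_def)

lemma wc_eval_letter [simp]: "wc_eval K (wc_letter b) = K [b]"
  by (simp add: wc_letter_def)

lemma wc_eval_concat: "wc_eval K (concat Fs) = sum_list (map (wc_eval K) Fs)"
  by (induction Fs) auto

lemma wc_eval_zero_fun [simp]: "wc_eval (\<lambda>w. 0) F = 0"
  by (induction F) auto

lemma wc_eval_add_fun: "wc_eval (\<lambda>w. f w + g w) F = wc_eval f F + wc_eval g F"
  by (induction F) (auto simp: algebra_simps)

lemma wc_eval_minus_fun: "wc_eval (\<lambda>w. - f w) F = - wc_eval f F"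
  by (induction F) (auto simp: algebra_simps)

lemma wc_eval_diff_fun: "wc_eval (\<lambda>w. f w - g w) F = wc_eval f F - wc_eval g F"
  by (induction F) (auto simp: algebra_simps)

lemma wc_eval_cong: "(\<And>s w. (s, w) \<in> set F \<Longrightarrow> K w = L w) \<Longrightarrow> wc_eval K F = wc_eval L F"
proof (induction F)
  case (Cons p F)
  then show ?case by (cases p) (metis wc_eval_Cons list.set_intros)
qed simp

lemma additive_wc_eval:
  assumes "\<And>x y. f (x + y) = f x + f y"
  shows "f (wc_eval K F) = wc_eval (\<lambda>w. f (K w)) F"
proof -
  interpret additive f by unfold_locales (rule assms)
  show ?thesis by (induction F) (auto simp: add minus zero)
qed

lemma wc_eval_mult: "wc_eval K (wc_mult F G) = wc_eval (\<lambda>v. wc_eval (\<lambda>w. K (v @ w)) G) F"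
proof -
  have "wc_eval K (map (\<lambda>(t, w). (s = t, v @ w)) G) =
          (if s then wc_eval (\<lambda>w. K (v @ w)) G else - wc_eval (\<lambda>w. K (v @ w)) G)" for s v
    by (induction G) auto
  then show ?thesis by (induction F) (auto simp: wc_mult_def wc_eval_concat)
qed

lemma wc_eval_swap:
  "wc_eval (\<lambda>v. wc_eval (\<lambda>w. K v w) G) F = wc_eval (\<lambda>w. wc_eval (\<lambda>v. K v w) F) G"
  by (induction F) (auto simp: wc_eval_add_fun wc_eval_minus_fun)

lemma wc_eval_comm:
  "wc_eval K (wc_comm F G) =
     wc_eval (\<lambda>v. wc_eval (\<lambda>w. K (v @ w)) G - wc_eval (\<lambda>w. K (w @ v)) G) F"
  unfolding wc_comm_def by (simp add: wc_eval_mult wc_eval_diff_fun wc_eval_swap[of _ G F])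

lemma wc_comm_jacobi:
  "wc_eval K (wc_comm X (wc_comm A B)) =
     wc_eval K (wc_comm (wc_comm X A) B) + wc_eval K (wc_comm A (wc_comm X B))"
  by (simp add: wc_eval_comm wc_eval_diff_fun wc_eval_add_fun wc_eval_minus_fun
      wc_eval_swap[of _ X A] algebra_simps)

lemma left_comm_single [simp]: "left_comm [F] = F"
  by (simp add: left_comm_def)

lemma left_comm_snoc: "Fs \<noteq> [] \<Longrightarrow> left_comm (Fs @ [G]) = wc_comm (left_comm Fs) G"
  by (cases Fs) (auto simp: left_comm_def)

lemma wc_comm_left_comm_leibniz:
  assumes "Ys \<noteq> []"
  shows "wc_eval K (wc_comm X (left_comm Ys)) =
           (\<Sum>i<length Ys. wc_eval K (left_comm (Ys[i := wc_comm X (Ys ! i)])))"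
  using assms
proof (induction Ys arbitrary: K rule: rev_induct)
  case (snoc Y Ys)
  show ?case
  proof (cases "Ys = []")
    case False
    define K' where "K' = (\<lambda>v. wc_eval (\<lambda>w. K (v @ w)) Y - wc_eval (\<lambda>w. K (w @ v)) Y)"
    have update_init: "(Ys @ [Y])[i := wc_comm X ((Ys @ [Y]) ! i)] = Ys[i := wc_comm X (Ys ! i)] @ [Y]"
      if "i < length Ys" for i
      using that by (simp add: list_update_append nth_append)
    have "wc_eval K (wc_comm (wc_comm X (left_comm Ys)) Y) = wc_eval K' (wc_comm X (left_comm Ys))"
      by (simp add: wc_eval_comm K'_def)
    also have "\<dots> = (\<Sum>i<length Ys. wc_eval K' (left_comm (Ys[i := wc_comm X (Ys ! i)])))"
      using snoc.IH[OF False] .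
    also have "\<dots> = (\<Sum>i<length Ys. wc_eval K (left_comm ((Ys @ [Y])[i := wc_comm X ((Ys @ [Y]) ! i)])))"
      using False by (intro sum.cong refl) (simp add: update_init left_comm_snoc wc_eval_comm K'_def)
    finally have init: "wc_eval K (wc_comm (wc_comm X (left_comm Ys)) Y) =
        (\<Sum>i<length Ys. wc_eval K (left_comm ((Ys @ [Y])[i := wc_comm X ((Ys @ [Y]) ! i)])))" .
    have last: "wc_eval K (wc_comm (left_comm Ys) (wc_comm X Y)) =
        wc_eval K (left_comm ((Ys @ [Y])[length Ys := wc_comm X ((Ys @ [Y]) ! length Ys)]))"
      using False by (simp add: left_comm_snoc)
    have "wc_eval K (wc_comm X (left_comm (Ys @ [Y]))) =
        wc_eval K (wc_comm (wc_comm X (left_comm Ys)) Y) + wc_eval K (wc_comm (left_comm Ys) (wc_comm X Y))"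
      unfolding left_comm_snoc[OF False] by (rule wc_comm_jacobi)
    then show ?thesis
      by (simp only: init last length_append_singleton sum.lessThan_Suc)
  qed simp
qed simp

lemma wc_prod_Cons [simp]: "wc_prod (F # Fs) = wc_mult F (wc_prod Fs)"
  by (simp add: wc_prod_def)

lemma wc_eval_prod_Nil [simp]: "wc_eval K (wc_prod []) = K []"
  by (simp add: wc_prod_def wc_one_def)

lemma wc_eval_prod_append:
  "wc_eval K (wc_prod (Fs @ Gs)) = wc_eval K (wc_mult (wc_prod Fs) (wc_prod Gs))"
  by (induction Fs arbitrary: K) (simp_all add: wc_eval_mult)

lemma wc_eval_prod_letters [simp]: "wc_eval K (wc_prod (map wc_letter ws)) = K ws"
  by (induction ws arbitrary: K) (simp_all add: wc_eval_mult)

lemma wc_eval_left_comm_subst: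
  assumes "bs \<noteq> []"
  shows "wc_eval K (left_comm (map \<phi> bs)) =
           wc_eval (\<lambda>w. wc_eval K (wc_prod (map \<phi> w))) (left_comm (map wc_letter bs))"
  using assms
proof (induction bs arbitrary: K rule: rev_induct)
  case (snoc c bs)
  show ?case
  proof (cases "bs = []")
    case True
    then show ?thesis by (simp add: wc_eval_mult)
  next
    case False
    have "wc_eval (\<lambda>v. wc_eval (\<lambda>w. K (v @ w)) (\<phi> c) - wc_eval (\<lambda>w. K (w @ v)) (\<phi> c))
            (wc_prod (map \<phi> u)) =
          wc_eval K (wc_prod (map \<phi> (u @ [c]))) - wc_eval K (wc_prod (map \<phi> (c # u)))" for u
      by (simp add: wc_eval_prod_append wc_eval_mult wc_eval_diff_fun wc_eval_swap[of _ "\<phi> c"])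
    with snoc.IH[OF False] False show ?thesis
      by (simp add: left_comm_snoc wc_eval_comm)
  qed
qed simp

lemma mset_left_comm_letters:
  assumes "bs \<noteq> []" and "(s, w) \<in> set (left_comm (map wc_letter bs))"
  shows "mset w = mset bs"
  using assms
proof (induction bs arbitrary: s w rule: rev_induct)
  case (snoc b bs)
  show ?case
  proof (cases "bs = []")
    case True
    then show ?thesis using snoc.prems by (simp add: wc_letter_def)
  next
    case False
    with snoc.prems have "(s, w) \<in> set (wc_comm (left_comm (map wc_letter bs)) (wc_letter b))"
      by (simp add: left_comm_snoc)
    then obtain s' v where "(s', v) \<in> set (left_comm (map wc_letter bs))"
      and "w = v @ [b] \<or> w = b # v"
      unfolding wc_comm_def wc_mult_def wc_neg_def wc_letter_def[of b] by auto
    with snoc.IH[OF False] show ?thesis by auto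
  qed
qed simp

lemma sum_list_concat: "sum_list (concat xss) = sum_list (map sum_list xss)"
  by (induction xss) auto

lemma comm_words_letters: "(s, w) \<in> set (comm_words m) \<Longrightarrow> set w \<subseteq> {1..m}"
proof (induction m arbitrary: s w rule: comm_words.induct)
  case (4 k)
  then show ?case by (fastforce split: prod.splits)
qed auto

lemma comm_words_sum_eq_left_comm:
  assumes "module scale" and "2 \<le> m" and "length as = m"
  shows "sum_list (map (\<lambda>(s, w). scale (of_int s) (K (map (\<lambda>j. as ! (j - 1)) w))) (comm_words m)) =
           wc_eval K (left_comm (map wc_letter as))"
  using assms(2,3)
proof (induction m arbitrary: as K rule: nat_induct_at_least)
  case base
  then obtain a b where "as = [a, b]"
    by (metis One_nat_def Suc_1 length_0_conv length_Suc_conv)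
  then show ?case
    by (simp add: module.scale_minus_left[OF assms(1)] module.scale_one[OF assms(1)]
        numeral_2_eq_2 wc_comm_def wc_mult_def wc_neg_def wc_letter_def left_comm_def)
next
  case (Suc m)
  obtain bs a where as: "as = bs @ [a]" and bs: "length bs = m"
    using Suc.prems by (cases as rule: rev_cases) auto
  obtain k where k: "m = Suc (Suc k)"
    using Suc.hyps by (metis add_2_eq_Suc le_iff_add)
  define word where "word z = map (\<lambda>j. bs ! (j - 1)) z" for z
  have as_word: "map (\<lambda>j. as ! (j - 1)) z = word z" if "(s, z) \<in> set (comm_words m)" for s z
    using comm_words_letters[OF that] bs unfolding as word_def
    by (intro map_cong refl) (force simp: nth_append)
  have "sum_list (map (\<lambda>(s, w). scale (of_int s) (K (map (\<lambda>j. as ! (j - 1)) w))) (comm_words (Suc m))) =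
        sum_list (map (\<lambda>(s, z). scale (of_int s) (K (word z @ [a])) - scale (of_int s) (K (a # word z)))
          (comm_words m))"
    unfolding k comm_words.simps(4) map_concat sum_list_concat map_map
    using as_word bs
    by (intro arg_cong[where f = sum_list] map_cong refl)
       (auto simp: k as nth_append module.scale_minus_left[OF assms(1)])
  also have "\<dots> = wc_eval (\<lambda>v. K (v @ [a])) (left_comm (map wc_letter bs)) -
                  wc_eval (\<lambda>v. K (a # v)) (left_comm (map wc_letter bs))"
    using Suc.IH[OF bs, of "\<lambda>v. K (v @ [a])"] Suc.IH[OF bs, of "\<lambda>v. K (a # v)"]
    unfolding case_prod_beta sum_list_subtractf by (simp add: word_def)
  also have "\<dots> = wc_eval K (left_comm (map wc_letter as))"
  proof -
    have "map wc_letter bs \<noteq> []" using bs Suc.hyps by auto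
    then show ?thesis by (simp add: as left_comm_snoc wc_eval_comm wc_eval_diff_fun)
  qed
  finally show ?case .
qed

lemma n_commutator_eq_left_comm:
  assumes "module scale" and "2 \<le> n" and "length as = n"
  shows "n_commutator scale n mu as = wc_eval mu (left_comm (map wc_letter as))"
  unfolding n_commutator_def using comm_words_sum_eq_left_comm[OF assms] .

text \<open>The product of \<open>2n - 1\<close> elements, which total associativity makes independent of where
  the inner factor is placed.\<close>

definition total_prod :: "nat \<Rightarrow> ('a list \<Rightarrow> 'a) \<Rightarrow> 'a list \<Rightarrow> 'a" where
  "total_prod n mu ws = mu (mu (take n ws) # drop n ws)"

lemma totally_associative_shift:
  assumes "totally_associative n mu" and "length ws = 2 * n - 1" and "p \<le> n - 1"
  shows "mu (take p ws @ [mu (take n (drop p ws))] @ drop (p + n) ws) = total_prod n mu ws"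
  using assms(3)
proof (induction p)
  case 0
  then show ?case by (simp add: total_prod_def)
next
  case (Suc p)
  then have "p + 2 \<le> n" by simp
  with assms(1,2) Suc show ?case
    unfolding totally_associative_def by (metis Suc_leD)
qed

lemma totally_associative_insert:
  assumes "totally_associative n mu" and "length z = n" and "length pre + length suf + 1 = n"
  shows "mu (pre @ mu z # suf) = total_prod n mu (pre @ z @ suf)"
  using totally_associative_shift[OF assms(1), of "pre @ z @ suf" "length pre"] assms(2,3) by simp

lemma multilinear_add:
  assumes "multilinear scale n mu" and "length pre + length suf + 1 = n"
  shows "mu (pre @ (x + y) # suf) = mu (pre @ x # suf) + mu (pre @ y # suf)"
proof -
  have "mu ((pre @ x # suf)[length pre := x + y]) =
          mu ((pre @ x # suf)[length pre := x]) + mu ((pre @ x # suf)[length pre := y])"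
    using assms(1)[unfolded multilinear_def, rule_format, of "pre @ x # suf" "length pre"] assms(2)
    by simp
  then show ?thesis by (simp add: list_update_append)
qed

lemma wc_eval_insert_total_prod:
  assumes "multilinear scale n mu" and "totally_associative n mu"
    and "length pre + length suf + 1 = n" and "\<And>t z. (t, z) \<in> set G \<Longrightarrow> length z = n"
  shows "mu (pre @ wc_eval mu G # suf) =
           wc_eval (total_prod n mu) (wc_prod (map wc_letter pre @ [G] @ map wc_letter suf))"
proof -
  have "mu (pre @ wc_eval mu G # suf) = wc_eval (\<lambda>z. mu (pre @ mu z # suf)) G"
    by (rule additive_wc_eval) (rule multilinear_add[OF assms(1,3)])
  also have "\<dots> = wc_eval (\<lambda>z. total_prod n mu (pre @ z @ suf)) G"
    using totally_associative_insert[OF assms(2) assms(4) assms(3)] by (rule wc_eval_cong)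
  also have "\<dots> = wc_eval (total_prod n mu) (wc_prod (map wc_letter pre @ [G] @ map wc_letter suf))"
    by (simp add: wc_eval_prod_append wc_eval_mult)
  finally show ?thesis .
qed

lemma left_comm_positions_split:
  assumes "(s, w) \<in> set (left_comm (map wc_letter [0..<n]))" and "0 < n" and "i < n"
  obtains pre suf where "w = pre @ i # suf" and "length pre + length suf + 1 = n"
    and "i \<notin> set pre" and "i \<notin> set suf" and "set w = {0..<n}"
proof -
  have "mset w = mset [0..<n]"
    using mset_left_comm_letters[OF _ assms(1)] assms(2) by simp
  then have "distinct w" and set_w: "set w = {0..<n}" and "length w = n"
    by (metis distinct_upt mset_eq_imp_distinct_iff, metis mset_eq_setD set_upt,
        metis length_upt minus_nat.diff_0 size_mset)
  moreover obtain pre suf where "w = pre @ i # suf"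
    using split_list[of i w] set_w assms(3) by auto
  ultimately show ?thesis using that by auto
qed

lemma n_commutator_nested:
  assumes "module scale" and "2 \<le> n" and "multilinear scale n mu" and "totally_associative n mu"
    and "length as = n" and "i < n" and "length gs = n"
  shows "n_commutator scale n mu (as[i := n_commutator scale n mu gs]) =
           wc_eval (total_prod n mu) (left_comm ((map wc_letter as)[i := left_comm (map wc_letter gs)]))"
proof -
  define G where "G = left_comm (map wc_letter gs)"
  define Y where "Y = wc_eval mu G"
  have Y: "n_commutator scale n mu gs = Y"
    unfolding Y_def G_def by (rule n_commutator_eq_left_comm[OF assms(1,2,7)])
  have G_words: "length z = n" if "(t, z) \<in> set G" for t z
    using mset_left_comm_letters[of gs t z] that assms(2,7) unfolding G_def
    by (metis list.size(3) not_numeral_le_zero size_mset)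
  txt \<open>Over the alphabet of positions \<open>0..<n\<close> every word of the outer bracket is a permutation,
    so the substituted slot \<open>i\<close> occurs in it exactly once.\<close>
  define \<phi>Y where "\<phi>Y j = wc_letter (as[i := Y] ! j)" for j
  define \<phi>G where "\<phi>G j = (map wc_letter as)[i := G] ! j" for j
  have map_\<phi>Y: "map \<phi>Y [0..<n] = map wc_letter (as[i := Y])"
    and map_\<phi>G: "map \<phi>G [0..<n] = (map wc_letter as)[i := G]"
    using assms(5) by (simp_all add: \<phi>Y_def \<phi>G_def list_eq_iff_nth_eq)
  have word: "wc_eval mu (wc_prod (map \<phi>Y w)) = wc_eval (total_prod n mu) (wc_prod (map \<phi>G w))"
    if w_word: "(s, w) \<in> set (left_comm (map wc_letter [0..<n]))" for s w
  proof -
    obtain pre suf where w: "w = pre @ i # suf" and len: "length pre + length suf + 1 = n"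
      and "i \<notin> set pre" "i \<notin> set suf" and set_w: "set w = {0..<n}"
      using left_comm_positions_split[OF w_word] assms(2,6) by auto
    define pre' where "pre' = map (\<lambda>j. as ! j) pre"
    define suf' where "suf' = map (\<lambda>j. as ! j) suf"
    have "map \<phi>Y w = map wc_letter (pre' @ Y # suf')"
      and "map \<phi>G w = map wc_letter pre' @ [G] @ map wc_letter suf'"
      using set_w assms(5,6) \<open>i \<notin> set pre\<close> \<open>i \<notin> set suf\<close>
      by (auto simp: w pre'_def suf'_def \<phi>Y_def \<phi>G_def nth_list_update)
    moreover have "mu (pre' @ Y # suf') =
        wc_eval (total_prod n mu) (wc_prod (map wc_letter pre' @ [G] @ map wc_letter suf'))"
      unfolding Y_def
      by (rule wc_eval_insert_total_prod[OF assms(3,4) _ G_words])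
        (use len in \<open>simp_all add: pre'_def suf'_def\<close>)
    ultimately show ?thesis by (simp only: wc_eval_prod_letters)
  qed
  have "n_commutator scale n mu (as[i := n_commutator scale n mu gs]) =
          wc_eval mu (left_comm (map \<phi>Y [0..<n]))"
    using assms by (simp add: Y map_\<phi>Y n_commutator_eq_left_comm)
  also have "\<dots> = wc_eval (\<lambda>w. wc_eval mu (wc_prod (map \<phi>Y w))) (left_comm (map wc_letter [0..<n]))"
    by (rule wc_eval_left_comm_subst) (use assms(2) in simp)
  also have "\<dots> = wc_eval (\<lambda>w. wc_eval (total_prod n mu) (wc_prod (map \<phi>G w)))
                    (left_comm (map wc_letter [0..<n]))"
    using word by (rule wc_eval_cong)
  also have "\<dots> = wc_eval (total_prod n mu) (left_comm ((map wc_letter as)[i := G]))"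
    unfolding map_\<phi>G[symmetric] by (rule wc_eval_left_comm_subst[symmetric]) (use assms(2) in simp)
  finally show ?thesis unfolding G_def .
qed

theorem corollary4p6:
  fixes scale :: "'k::field_char_0 \<Rightarrow> 'a::ab_group_add \<Rightarrow> 'a"
    and n :: nat and mu :: "'a list \<Rightarrow> 'a"
  assumes "vector_space scale"
    and "2 \<le> n"
    and "multilinear scale n mu"
    and "totally_associative n mu"
  shows "nambu n (n_commutator scale n mu)"
  unfolding nambu_def
proof (intro allI impI, elim conjE)
  fix xs ys :: "'a list"
  assume xs: "length xs = n - 1" and ys: "length ys = n"
  have "module scale" using assms(1) by (simp add: module_iff_vector_space)
  note nested = n_commutator_nested[OF this assms(2-4)]
  let ?br = "n_commutator scale n mu" and ?ev = "wc_eval (total_prod n mu)"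
  define X where "X = left_comm (map wc_letter xs)"
  define Ys where "Ys = map wc_letter ys"
  have "map wc_letter xs \<noteq> []" using xs assms(2) by auto
  then have X_snoc: "left_comm (map wc_letter xs @ [Y]) = wc_comm X Y" for Y
    by (simp add: X_def left_comm_snoc)
  have "?br (xs @ [?br ys]) = ?br ((xs @ [hd ys])[n - 1 := ?br ys])"
    using xs by (simp add: list_update_append)
  also have "\<dots> = ?ev (left_comm ((map wc_letter (xs @ [hd ys]))[n - 1 := left_comm Ys]))"
    unfolding Ys_def by (rule nested) (use xs ys assms(2) in auto)
  also have "\<dots> = ?ev (wc_comm X (left_comm Ys))"
    using xs by (simp add: list_update_append X_snoc)
  also have "\<dots> = (\<Sum>i<n. ?ev (left_comm (Ys[i := wc_comm X (Ys ! i)])))"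
  proof -
    have "Ys \<noteq> []" using ys assms(2) by (auto simp: Ys_def)
    from wc_comm_left_comm_leibniz[OF this] show ?thesis by (simp add: Ys_def ys)
  qed
  also have "\<dots> = (\<Sum>i<n. ?br (ys[i := ?br (xs @ [ys ! i])]))"
    using xs ys by (intro sum.cong refl) (simp add: nested X_snoc Ys_def)
  finally show "?br (xs @ [?br ys]) = (\<Sum>i<n. ?br (ys[i := ?br (xs @ [ys ! i])]))" .
qed

end
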